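(* Assume the symmetric setting $g_1=g_2=g>0$, $m_1=m_2=m>0$, $\alpha=\lambda=1$, $\eta^A=\eta=-\eta^a>0$, and assume $$g(\eta^2+1)<1\quad\text{or}\quad m<\frac{2g^2\eta^2}{g(\eta^2+1)-1}-g(\eta^2+1)+1 .$$ Then there exists a unique $\bar Y^*=(N_1^{a,*},N_2^{a,*},N_1^{A,*},N_2^{A,*},\delta^*,\delta^{A,*},\delta^{a,*})\in(0,\infty)^4\times\mathbb{R}^3$ with $G(\bar Y^*,0)=0$. Moreover $F(\bar Y^* )=0$, so that $(\bar Y^*,Z^*=0)$ is a stationary point of the limit system $G(\bar Y,Z)=0$, $\frac{dZ}{dt}=-2gZ+F(\bar Y)$; and it satisfies $N_1^{a,*}=N_2^{A,*}$, $N_2^{a,*}=N_1^{A,*}$ and $\delta^{A,*}=\delta^{a,*}$.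
   Context: Fast variable $\bar Y=(N_1^a,N_2^a,N_1^A,N_2^A,\delta,\delta^A,\delta^a)$, where $N_i^A,N_i^a$ are allelic subpopulation sizes in patch $i\in\{1,2\}$. Notation: $p_i=\frac{N_i^A}{N_i^A+N_i^a}$, $q_i=1-p_i$, $R^A=\frac{mN_2^A}{N_1^A}$, $S^A=\frac{mN_1^A}{N_2^A}$, $R^a=\frac{mN_2^a}{N_1^a}$, $S^a=\frac{mN_1^a}{N_2^a}$. With $\eta^A=\eta$, $\eta^a=-\eta$, the map $G$ has components: for $i\in\{1,2\}$, $j=3-i$, $\kappa\in\{A,a\}$, $G_{N_i^\kappa}=N_i^\kappa-(N_i^A+N_i^a)N_i^\kappa-g\big(Z+\eta^\kappa-(-1)^i\big)^2N_i^\kappa+m(N_j^\kappa-N_i^\kappa)$; $G_\delta=-\frac{\delta}{2}-2g\eta+\frac{\delta^A}{2}(R^A-S^A)-\frac{\delta^a}{2}(R^a-S^a)$; $G_{\delta^A}=2g+\frac{\delta}{2}(q_1-q_2)-\delta^A(R^A+S^A)+\frac{\delta^a-\delta^A}{4}(q_1+q_2)$; $G_{\delta^a}=2g+\frac{\delta}{2}(p_2-p_1)-\delta^a(R^a+S^a)+\frac{\delta^A-\delta^a}{4}(p_1+p_2)$. The map $F$ is $F(\bar Y)=\frac{\delta}{2}(p_1+p_2-1)+\frac{\delta^a}{2}(R^a-S^a)+\frac{\delta^A}{2}(R^A-S^A)+\frac{\delta^A-\delta^a}{4}(p_2-p_1)$. *)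

theory Defs
  imports Complex_Main
begin

text \<open>Fast variable Y = (N1a, N2a, N1A, N2A, delta, deltaA, deltaa).
  Symmetric setting: g1 = g2 = g, m1 = m2 = m, alpha = lambda = 1,
  etaA = eta, etaa = - eta.\<close>

type_synonym fastvar = "real \<times> real \<times> real \<times> real \<times> real \<times> real \<times> real"

definition GN :: "real \<Rightarrow> real \<Rightarrow> nat \<Rightarrow> real \<Rightarrow> real \<Rightarrow> real \<Rightarrow> real \<Rightarrow> real \<Rightarrow> real \<Rightarrow> real" where
  "GN g m i etak Ni Nj NiA Nia Z =
     Ni - (NiA + Nia) * Ni - g * (Z + etak - (-1) ^ i)\<^sup>2 * Ni + m * (Nj - Ni)"

definition Gmap :: "real \<Rightarrow> real \<Rightarrow> real \<Rightarrow> fastvar \<Rightarrow> real \<Rightarrow> fastvar" where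
  "Gmap g m eta Y Z =
    (case Y of (N1a, N2a, N1A, N2A, d, dA, da) \<Rightarrow>
      let p1 = N1A / (N1A + N1a); p2 = N2A / (N2A + N2a);
          q1 = 1 - p1; q2 = 1 - p2;
          RA = m * N2A / N1A; SA = m * N1A / N2A;
          Ra = m * N2a / N1a; Sa = m * N1a / N2a
      in ( GN g m 1 (-eta) N1a N2a N1A N1a Z,
           GN g m 2 (-eta) N2a N1a N2A N2a Z,
           GN g m 1 eta N1A N2A N1A N1a Z,
           GN g m 2 eta N2A N1A N2A N2a Z,
           - d / 2 - 2 * g * eta + dA / 2 * (RA - SA) - da / 2 * (Ra - Sa),
           2 * g + d / 2 * (q1 - q2) - dA * (RA + SA) + (da - dA) / 4 * (q1 + q2),
           2 * g + d / 2 * (p2 - p1) - da * (Ra + Sa) + (dA - da) / 4 * (p1 + p2)))"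

definition Fmap :: "real \<Rightarrow> fastvar \<Rightarrow> real" where
  "Fmap m Y =
    (case Y of (N1a, N2a, N1A, N2A, d, dA, da) \<Rightarrow>
      let p1 = N1A / (N1A + N1a); p2 = N2A / (N2A + N2a);
          RA = m * N2A / N1A; SA = m * N1A / N2A;
          Ra = m * N2a / N1a; Sa = m * N1a / N2a
      in d / 2 * (p1 + p2 - 1) + da / 2 * (Ra - Sa) + dA / 2 * (RA - SA)
         + (dA - da) / 4 * (p2 - p1))"

end

theory Submission
  imports Defs
begin

text \<open>At Z = 0 the population equations force the symmetry N_1^a = N_2^A, N_2^a = N_1^A
  (subtracting them pairwise gives N_1^a N_1^A = N_2^a N_2^A and N_1^a + N_1^A = N_2^a + N_2^A).
  What remains is a quadratic for the ratio t = N_2^a / N_1^a, which has exactly one positive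
  root, and a linear equation for N_1^a, whose solution is positive under the
  hypothesis on g, m and \<eta>. The three covariance equations are then linear in
  (\<delta>, \<delta>^A, \<delta>^a) with a unique solution, which has \<delta>^A = \<delta>^a and
  makes F vanish.\<close>

text \<open>Here x = N_1^a and y = N_2^a: with N_1^A = y and N_2^A = x, the second equation is the
  N_1^a-equation, and given it the first is equivalent to the N_2^a-equation.\<close>

definition population_equilibrium :: "real \<Rightarrow> real \<Rightarrow> real \<Rightarrow> real \<Rightarrow> real \<Rightarrow> bool" where
  "population_equilibrium g m eta x y \<longleftrightarrow>
     m * (x\<^sup>2 - y\<^sup>2) = 4 * g * eta * x * y \<and>
     x * (x + y) = x * (1 - g * (1 - eta)\<^sup>2 - m) + m * y"

definition symmetric_equilibrium :: "real \<Rightarrow> real \<Rightarrow> real \<Rightarrow> real \<Rightarrow> real \<Rightarrow> fastvar" where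
  "symmetric_equilibrium g m eta x y =
     (let w = g * (1 - eta * (x - y) / (x + y)) / m
      in (x, y, y, x, 8 * g * eta * w - 4 * g * eta, w, w))"

lemma Gmap_at_zero:
  "Gmap g m eta (x, y, u, v, d, a1, a2) 0 =
   ( x - (u + x) * x - g * (1 - eta)\<^sup>2 * x + m * (y - x),
     y - (v + y) * y - g * (eta + 1)\<^sup>2 * y + m * (x - y),
     u - (u + x) * u - g * (eta + 1)\<^sup>2 * u + m * (v - u),
     v - (v + y) * v - g * (eta - 1)\<^sup>2 * v + m * (u - v),
     - d / 2 - 2 * g * eta + a1 / 2 * (m * v / u - m * u / v) - a2 / 2 * (m * y / x - m * x / y),
     2 * g + d / 2 * ((1 - u / (u + x)) - (1 - v / (v + y))) - a1 * (m * v / u + m * u / v)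
       + (a2 - a1) / 4 * ((1 - u / (u + x)) + (1 - v / (v + y))),
     2 * g + d / 2 * (v / (v + y) - u / (u + x)) - a2 * (m * y / x + m * x / y)
       + (a1 - a2) / 4 * (u / (u + x) + v / (v + y)))"
proof -
  have "(- eta - 1)\<^sup>2 = (eta + 1)\<^sup>2" by algebra
  then show ?thesis by (simp add: Gmap_def GN_def Let_def)
qed

lemma population_equations_iff:
  fixes g m eta x y u v :: real
  assumes "g > 0" "eta > 0" "x > 0" "y > 0" "u > 0" "v > 0"
  shows "(x - (u + x) * x - g * (1 - eta)\<^sup>2 * x + m * (y - x) = 0 \<and>
          y - (v + y) * y - g * (eta + 1)\<^sup>2 * y + m * (x - y) = 0 \<and>
          u - (u + x) * u - g * (eta + 1)\<^sup>2 * u + m * (v - u) = 0 \<and>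
          v - (v + y) * v - g * (eta - 1)\<^sup>2 * v + m * (u - v) = 0)
     \<longleftrightarrow> u = y \<and> v = x \<and> population_equilibrium g m eta x y"
    (is "?E1 \<and> ?E2 \<and> ?E3 \<and> ?E4 \<longleftrightarrow> _")
proof
  assume "?E1 \<and> ?E2 \<and> ?E3 \<and> ?E4"
  then have E1: ?E1 and E2: ?E2 and E3: ?E3 and E4: ?E4 by auto
  have h1: "m * (x * v - u * y) = 4 * g * eta * x * u" using E1 E3 by algebra
  have h2: "m * (x * v - u * y) = 4 * g * eta * y * v" using E2 E4 by algebra
  from h1 h2 have "4 * g * eta * (x * u - y * v) = 0" by algebra
  with assms have prod_eq: "x * u = y * v" by simp
  have "u * (m * (x\<^sup>2 - y\<^sup>2) - 4 * g * eta * x * y) = 0" using h1 prod_eq by algebra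
  with \<open>u > 0\<close> have quad: "m * (x\<^sup>2 - y\<^sup>2) = 4 * g * eta * x * y" by simp
  have "x \<noteq> y"
  proof
    assume "x = y"
    with quad have "4 * g * eta * x * x = 0" by simp
    with assms show False by simp
  qed
  have s1: "x * (x + u) = x * (1 - g * (1 - eta)\<^sup>2 - m) + m * y" using E1 by algebra
  have s4: "v * (v + y) = v * (1 - g * (1 - eta)\<^sup>2 - m) + m * u" using E4 by algebra
  have "x * v * (x + u) = x * v * (v + y)" using s1 s4 prod_eq by algebra
  with assms have sum_eq: "x + u = v + y" by simp
  have "(x - y) * (x - v) = 0" using sum_eq prod_eq by algebra
  with \<open>x \<noteq> y\<close> have "v = x" by simp
  with sum_eq have "u = y" by simp
  show "u = y \<and> v = x \<and> population_equilibrium g m eta x y"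
    using \<open>u = y\<close> \<open>v = x\<close> quad s1 unfolding population_equilibrium_def by simp
next
  assume "u = y \<and> v = x \<and> population_equilibrium g m eta x y"
  then have uv: "u = y" "v = x"
    and quad: "m * (x\<^sup>2 - y\<^sup>2) = 4 * g * eta * x * y"
    and lin: "x * (x + y) = x * (1 - g * (1 - eta)\<^sup>2 - m) + m * y"
    unfolding population_equilibrium_def by auto
  have E1: ?E1 using lin uv by algebra
  have "x * (y - (x + y) * y - g * (eta + 1)\<^sup>2 * y + m * (x - y)) = 0" using lin quad by algebra
  with \<open>x > 0\<close> have E2: ?E2 using uv by (simp add: add.commute)
  have E4: ?E4 using lin uv by algebra
  show "?E1 \<and> ?E2 \<and> ?E3 \<and> ?E4" using E1 E2 E4 uv by (simp add: add.commute)
qed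

lemma covariance_system_iff:
  fixes g m eta e T d a1 a2 :: real
  assumes "m > 0" "T > 0" "4 * g * eta * e = T - 2 * m"
  shows "(- d / 2 - 2 * g * eta + (a1 + a2) / 2 * (4 * g * eta) = 0 \<and>
          2 * g + d / 2 * e - a1 * T + (a2 - a1) / 4 = 0 \<and>
          2 * g + d / 2 * e - a2 * T + (a1 - a2) / 4 = 0)
     \<longleftrightarrow> a2 = a1 \<and> a1 = g * (1 - eta * e) / m \<and> d = 8 * g * eta * a1 - 4 * g * eta"
    (is "?E5 \<and> ?E6 \<and> ?E7 \<longleftrightarrow> _")
proof
  assume E: "?E5 \<and> ?E6 \<and> ?E7"
  have "(a2 - a1) * (T + 1 / 2)
      = (2 * g + d / 2 * e - a1 * T + (a2 - a1) / 4) - (2 * g + d / 2 * e - a2 * T + (a1 - a2) / 4)"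
    by (simp add: field_simps)
  with E have "(a2 - a1) * (T + 1 / 2) = 0" by simp
  with \<open>T > 0\<close> have a: "a2 = a1" by simp
  with E have d: "d = 8 * g * eta * a1 - 4 * g * eta" by (simp add: field_simps)
  from E a d assms(3) have "m * a1 = g * (1 - eta * e)" by algebra
  with a d \<open>m > 0\<close> show "a2 = a1 \<and> a1 = g * (1 - eta * e) / m \<and> d = 8 * g * eta * a1 - 4 * g * eta"
    by (simp add: field_simps)
next
  assume "a2 = a1 \<and> a1 = g * (1 - eta * e) / m \<and> d = 8 * g * eta * a1 - 4 * g * eta"
  then have a: "a2 = a1" and ma: "m * a1 = g * (1 - eta * e)"
    and d: "d = 8 * g * eta * a1 - 4 * g * eta"
    using \<open>m > 0\<close> by auto
  have T: "T = 4 * g * eta * e + 2 * m" using assms(3) by simp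
  have "2 * g + d / 2 * e - a1 * T = 2 * (g * (1 - eta * e) - m * a1)"
    unfolding d T by (simp add: field_simps)
  with ma have "2 * g + d / 2 * e - a1 * T = 0" by simp
  moreover have ?E5 using a by (simp add: d field_simps)
  ultimately show "?E5 \<and> ?E6 \<and> ?E7" using a by simp
qed

lemma allele_frequency_identities:
  fixes x y :: real
  assumes "x > 0" "y > 0"
  shows "x / (x + y) - y / (y + x) = (x - y) / (x + y)"
    and "y / (y + x) + x / (x + y) = 1"
  using assms by (simp_all add: add.commute diff_divide_distrib add_divide_distrib[symmetric])

lemma migration_ratio_identity:
  fixes x y m :: real
  assumes "x > 0" "y > 0"
  shows "(m * x / y - m * y / x) * ((x - y) / (x + y)) = (m * x / y + m * y / x) - 2 * m"
proof -
  have "m * x / y - m * y / x = m * ((x - y) * (x + y)) / (x * y)"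
    using assms by (simp add: field_simps power2_eq_square)
  then have "(m * x / y - m * y / x) * ((x - y) / (x + y))
      = (m * (x - y) * (x - y) * (x + y)) / ((x * y) * (x + y))"
    by (simp add: mult_ac)
  also have "\<dots> = m * (x - y) * (x - y) / (x * y)"
    using assms by (intro nonzero_mult_divide_mult_cancel_right) auto
  also have "\<dots> = (m * x / y + m * y / x) - 2 * m"
    using assms by (simp add: field_simps)
  finally show ?thesis .
qed

lemma Gmap_at_zero_symmetric:
  fixes g m eta x y :: real
  assumes "g > 0" "eta > 0" "x > 0" "y > 0" "population_equilibrium g m eta x y"
  defines "e \<equiv> (x - y) / (x + y)" and "T \<equiv> m * x / y + m * y / x"
  shows "Gmap g m eta (x, y, y, x, d, a1, a2) 0 =
           (0, 0, 0, 0,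
            - d / 2 - 2 * g * eta + (a1 + a2) / 2 * (4 * g * eta),
            2 * g + d / 2 * e - a1 * T + (a2 - a1) / 4,
            2 * g + d / 2 * e - a2 * T + (a1 - a2) / 4)"
    and "4 * g * eta * e = T - 2 * m"
proof -
  have migration_gap: "m * x / y - m * y / x = 4 * g * eta"
  proof -
    have "m * x / y - m * y / x = m * (x\<^sup>2 - y\<^sup>2) / (x * y)"
      using assms(3,4) by (simp add: field_simps power2_eq_square)
    with assms(3,4,5) show ?thesis by (simp add: population_equilibrium_def)
  qed
  then show "4 * g * eta * e = T - 2 * m"
    using migration_ratio_identity[OF assms(3,4), of m] unfolding e_def T_def by (simp only:)
  define p where "p = x / (x + y)"
  have q: "y / (y + x) = 1 - p" and e: "p - (1 - p) = e"
    using allele_frequency_identities[OF assms(3,4)] unfolding p_def e_def by auto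
  have populations:
      "x - (y + x) * x - g * (1 - eta)\<^sup>2 * x + m * (y - x) = 0 \<and>
       y - (x + y) * y - g * (eta + 1)\<^sup>2 * y + m * (x - y) = 0 \<and>
       y - (y + x) * y - g * (eta + 1)\<^sup>2 * y + m * (x - y) = 0 \<and>
       x - (x + y) * x - g * (eta - 1)\<^sup>2 * x + m * (y - x) = 0"
    using population_equations_iff[OF assms(1-4) assms(4,3)] assms(5) by simp
  have "c + a1 / 2 * (A - B) - a2 / 2 * (B - A) = c + (a1 + a2) / 2 * K"
    if "A - B = K" for A B K c :: real
    using that by (simp add: field_simps)
  note covariance_sum = this[OF migration_gap]
  have frequencies: "(1 - (1 - p)) - (1 - p) = e" "(1 - (1 - p)) + (1 - p) = 1" "(1 - p) + p = 1"
    using e by simp_all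
  show "Gmap g m eta (x, y, y, x, d, a1, a2) 0 = (0, 0, 0, 0,
            - d / 2 - 2 * g * eta + (a1 + a2) / 2 * (4 * g * eta),
            2 * g + d / 2 * e - a1 * T + (a2 - a1) / 4,
            2 * g + d / 2 * e - a2 * T + (a1 - a2) / 4)"
    using populations frequencies
    unfolding Gmap_at_zero covariance_sum p_def[symmetric] q T_def by (simp add: add.commute)
qed

lemma Gmap_zero_iff_symmetric_equilibrium:
  fixes g m eta x y u v d a1 a2 :: real
  assumes "g > 0" "m > 0" "eta > 0" "x > 0" "y > 0" "u > 0" "v > 0"
  shows "Gmap g m eta (x, y, u, v, d, a1, a2) 0 = (0, 0, 0, 0, 0, 0, 0) \<longleftrightarrow>
         population_equilibrium g m eta x y \<and>
         (x, y, u, v, d, a1, a2) = symmetric_equilibrium g m eta x y"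
proof -
  define e where "e = (x - y) / (x + y)"
  define T where "T = m * x / y + m * y / x"
  have "T > 0" using assms unfolding T_def by (simp add: add_pos_pos)
  have covariance_iff:
    "Gmap g m eta (x, y, y, x, d, a1, a2) 0 = (0, 0, 0, 0, 0, 0, 0) \<longleftrightarrow>
       (x, y, y, x, d, a1, a2) = symmetric_equilibrium g m eta x y"
    if "population_equilibrium g m eta x y"
    using Gmap_at_zero_symmetric(1)[OF assms(1,3,4,5) that, of d a1 a2]
      Gmap_at_zero_symmetric(2)[OF assms(1,3,4,5) that]
      covariance_system_iff[OF \<open>m > 0\<close> \<open>T > 0\<close>, of g eta e d a1 a2]
    unfolding e_def T_def symmetric_equilibrium_def Let_def by auto
  show ?thesis
  proof
    assume G: "Gmap g m eta (x, y, u, v, d, a1, a2) 0 = (0, 0, 0, 0, 0, 0, 0)"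
    then have "u = y \<and> v = x \<and> population_equilibrium g m eta x y"
      using population_equations_iff[OF assms(1,3-7), of m]
      unfolding Gmap_at_zero prod.inject by blast
    with G covariance_iff show "population_equilibrium g m eta x y \<and>
         (x, y, u, v, d, a1, a2) = symmetric_equilibrium g m eta x y" by auto
  next
    assume "population_equilibrium g m eta x y \<and>
         (x, y, u, v, d, a1, a2) = symmetric_equilibrium g m eta x y"
    moreover then have "u = y" "v = x" by (simp_all add: symmetric_equilibrium_def Let_def)
    ultimately show "Gmap g m eta (x, y, u, v, d, a1, a2) 0 = (0, 0, 0, 0, 0, 0, 0)"
      using covariance_iff by auto
  qed
qed

lemma Fmap_symmetric_equilibrium:
  fixes x y :: real
  assumes "x > 0" "y > 0"
  shows "Fmap m (symmetric_equilibrium g m eta x y) = 0"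
proof -
  have "y / (y + x) + x / (x + y) = 1" using allele_frequency_identities[OF assms] by simp
  then have "Fmap m (x, y, y, x, d, w, w) = 0" for d w
    unfolding Fmap_def Let_def prod.case by (simp only:) (simp add: algebra_simps)
  then show ?thesis unfolding symmetric_equilibrium_def Let_def by simp
qed

definition equilibrium_ratio :: "real \<Rightarrow> real \<Rightarrow> real \<Rightarrow> real" where
  "equilibrium_ratio g m eta = (sqrt (4 * g\<^sup>2 * eta\<^sup>2 + m\<^sup>2) - 2 * g * eta) / m"

lemma equilibrium_ratio_pos:
  assumes "m > 0"
  shows "equilibrium_ratio g m eta > 0"
proof -
  have "(2 * g * eta)\<^sup>2 < 4 * g\<^sup>2 * eta\<^sup>2 + m\<^sup>2"
    using assms by (simp add: power_mult_distrib)
  then have "2 * g * eta < sqrt (4 * g\<^sup>2 * eta\<^sup>2 + m\<^sup>2)" by (rule real_less_rsqrt)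
  with assms show ?thesis unfolding equilibrium_ratio_def by simp
qed

lemma equilibrium_ratio_root_iff:
  fixes t :: real
  assumes "m > 0" "g * eta \<ge> 0" "t > 0"
  shows "m * (1 - t\<^sup>2) = 4 * g * eta * t \<longleftrightarrow> t = equilibrium_ratio g m eta"
proof -
  define t0 where "t0 = equilibrium_ratio g m eta"
  have "t0 > 0" using equilibrium_ratio_pos[OF assms(1)] unfolding t0_def .
  have "(m * t0 + 2 * g * eta)\<^sup>2 = 4 * g\<^sup>2 * eta\<^sup>2 + m\<^sup>2"
    using assms(1) unfolding t0_def equilibrium_ratio_def by simp
  then have "m * (m * (1 - t0\<^sup>2) - 4 * g * eta * t0) = 0" by algebra
  with assms(1) have root: "m * (1 - t0\<^sup>2) = 4 * g * eta * t0" by simp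
  have "m * (1 - t\<^sup>2) - 4 * g * eta * t = - (t - t0) * (m * (t + t0) + 4 * g * eta)"
    using root by algebra
  moreover have "m * (t + t0) + 4 * g * eta > 0"
  proof -
    have "m * (t + t0) > 0" using assms \<open>t0 > 0\<close> by simp
    moreover have "4 * g * eta \<ge> 0" using assms(2) by (simp add: mult.assoc)
    ultimately show ?thesis by linarith
  qed
  ultimately show ?thesis unfolding t0_def[symmetric] by auto
qed

lemma population_equilibrium_iff_ratio:
  fixes x y :: real
  assumes "m > 0" "g * eta \<ge> 0" "x > 0" "y > 0"
  shows "population_equilibrium g m eta x y \<longleftrightarrow>
         y = equilibrium_ratio g m eta * x \<and>
         x * (1 + equilibrium_ratio g m eta) =
           1 - g * (1 - eta)\<^sup>2 - m + m * equilibrium_ratio g m eta"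
proof -
  define t where "t = y / x"
  have y: "y = t * x" and "t > 0" using assms(3,4) unfolding t_def by auto
  have "m * (x\<^sup>2 - y\<^sup>2) = 4 * g * eta * x * y \<longleftrightarrow> x\<^sup>2 * (m * (1 - t\<^sup>2) - 4 * g * eta * t) = 0"
    unfolding y by algebra
  also have "\<dots> \<longleftrightarrow> t = equilibrium_ratio g m eta"
    using assms(3) equilibrium_ratio_root_iff[OF assms(1,2) \<open>t > 0\<close>] by simp
  finally have quad: "m * (x\<^sup>2 - y\<^sup>2) = 4 * g * eta * x * y \<longleftrightarrow> t = equilibrium_ratio g m eta" .
  have "x * (x + y) = x * (1 - g * (1 - eta)\<^sup>2 - m) + m * y \<longleftrightarrow>
        x * (x * (1 + t) - (1 - g * (1 - eta)\<^sup>2 - m + m * t)) = 0"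
    unfolding y by algebra
  also have "\<dots> \<longleftrightarrow> x * (1 + t) = 1 - g * (1 - eta)\<^sup>2 - m + m * t"
    using assms(3) by simp
  finally show ?thesis using quad y unfolding population_equilibrium_def by auto
qed

lemma population_equilibrium_unique:
  assumes "m > 0" "g * eta \<ge> 0"
    and "1 - g * (1 - eta)\<^sup>2 - m + m * equilibrium_ratio g m eta > 0"
  obtains x0 y0 where "x0 > 0" "y0 > 0"
    and "\<And>x y. x > 0 \<and> y > 0 \<and> population_equilibrium g m eta x y \<longleftrightarrow> x = x0 \<and> y = y0"
proof -
  define t0 where "t0 = equilibrium_ratio g m eta"
  define x0 where "x0 = (1 - g * (1 - eta)\<^sup>2 - m + m * t0) / (1 + t0)"
  have "t0 > 0" using equilibrium_ratio_pos[OF assms(1)] unfolding t0_def .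
  then have "x0 > 0" and x0: "x0 * (1 + t0) = 1 - g * (1 - eta)\<^sup>2 - m + m * t0"
    using assms(3) unfolding x0_def t0_def by auto
  have "x > 0 \<and> y > 0 \<and> population_equilibrium g m eta x y \<longleftrightarrow> x = x0 \<and> y = t0 * x0"
    for x y
  proof
    assume "x > 0 \<and> y > 0 \<and> population_equilibrium g m eta x y"
    then have "y = t0 * x" "x * (1 + t0) = x0 * (1 + t0)"
      using population_equilibrium_iff_ratio[OF assms(1,2)] x0 unfolding t0_def by auto
    with \<open>t0 > 0\<close> show "x = x0 \<and> y = t0 * x0" by simp
  next
    assume "x = x0 \<and> y = t0 * x0"
    then show "x > 0 \<and> y > 0 \<and> population_equilibrium g m eta x y"
      using population_equilibrium_iff_ratio[OF assms(1,2)] x0 \<open>x0 > 0\<close> \<open>t0 > 0\<close>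
      unfolding t0_def by auto
  qed
  with \<open>x0 > 0\<close> \<open>t0 > 0\<close> show ?thesis
    using that[of x0 "t0 * x0"] by simp
qed

lemma Gmap_positive_zero_iff:
  fixes g m eta :: real and Y :: fastvar
  assumes "g > 0" "m > 0" "eta > 0"
  shows "(case Y of (N1a, N2a, N1A, N2A, d, dA, da) \<Rightarrow>
            N1a > 0 \<and> N2a > 0 \<and> N1A > 0 \<and> N2A > 0) \<and>
         Gmap g m eta Y 0 = (0, 0, 0, 0, 0, 0, 0) \<longleftrightarrow>
         (\<exists>x y. x > 0 \<and> y > 0 \<and> population_equilibrium g m eta x y \<and>
                Y = symmetric_equilibrium g m eta x y)"
proof (cases Y)
  case (fields x y u v d a1 a2)
  show ?thesis
  proof
    assume "(case Y of (N1a, N2a, N1A, N2A, d, dA, da) \<Rightarrow>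
              N1a > 0 \<and> N2a > 0 \<and> N1A > 0 \<and> N2A > 0) \<and>
            Gmap g m eta Y 0 = (0, 0, 0, 0, 0, 0, 0)"
    then show "\<exists>x y. x > 0 \<and> y > 0 \<and> population_equilibrium g m eta x y \<and>
                Y = symmetric_equilibrium g m eta x y"
      using Gmap_zero_iff_symmetric_equilibrium[OF assms, of x y u v] unfolding fields by auto
  next
    assume "\<exists>x y. x > 0 \<and> y > 0 \<and> population_equilibrium g m eta x y \<and>
                Y = symmetric_equilibrium g m eta x y"
    then obtain x' y' where "x' > 0" "y' > 0" "population_equilibrium g m eta x' y'"
      and Y: "Y = symmetric_equilibrium g m eta x' y'" by blast
    then show "(case Y of (N1a, N2a, N1A, N2A, d, dA, da) \<Rightarrow>
              N1a > 0 \<and> N2a > 0 \<and> N1A > 0 \<and> N2A > 0) \<and>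
            Gmap g m eta Y 0 = (0, 0, 0, 0, 0, 0, 0)"
      using Gmap_zero_iff_symmetric_equilibrium[OF assms \<open>x' > 0\<close> \<open>y' > 0\<close> \<open>y' > 0\<close> \<open>x' > 0\<close>]
      unfolding Y by (auto simp: symmetric_equilibrium_def Let_def)
  qed
qed

lemma equilibrium_size_pos:
  fixes g m eta :: real
  assumes "m > 0"
    and "g * (eta\<^sup>2 + 1) < 1 \<or>
         m < 2 * g\<^sup>2 * eta\<^sup>2 / (g * (eta\<^sup>2 + 1) - 1) - g * (eta\<^sup>2 + 1) + 1"
  shows "1 - g * (1 - eta)\<^sup>2 - m + m * equilibrium_ratio g m eta > 0"
proof -
  define E where "E = g * (eta\<^sup>2 + 1) - 1"
  have "m + E < sqrt (4 * g\<^sup>2 * eta\<^sup>2 + m\<^sup>2)"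
  proof (cases "E < 0")
    case True
    have "m \<le> sqrt (4 * g\<^sup>2 * eta\<^sup>2 + m\<^sup>2)" by (rule real_le_rsqrt) simp
    with True show ?thesis by simp
  next
    case False
    with assms(2) have bound: "m < 2 * g\<^sup>2 * eta\<^sup>2 / E - E" unfolding E_def by simp
    have "E > 0"
    proof (rule ccontr)
      assume "\<not> E > 0"
      with False have "E = 0" by simp
      with bound assms(1) show False by simp
    qed
    with bound have "m * E < 2 * g\<^sup>2 * eta\<^sup>2 - E\<^sup>2"
      by (simp add: field_simps power2_eq_square)
    then have "(m + E)\<^sup>2 < m\<^sup>2 + 2 * (2 * g\<^sup>2 * eta\<^sup>2 - E\<^sup>2) + E\<^sup>2"
      by (simp add: power2_eq_square algebra_simps)
    also have "\<dots> \<le> 4 * g\<^sup>2 * eta\<^sup>2 + m\<^sup>2" by simp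
    finally have "(m + E)\<^sup>2 < 4 * g\<^sup>2 * eta\<^sup>2 + m\<^sup>2" .
    then show ?thesis by (rule real_less_rsqrt)
  qed
  moreover have "m * equilibrium_ratio g m eta = sqrt (4 * g\<^sup>2 * eta\<^sup>2 + m\<^sup>2) - 2 * g * eta"
    using assms(1) unfolding equilibrium_ratio_def by simp
  then have "1 - g * (1 - eta)\<^sup>2 - m + m * equilibrium_ratio g m eta
      = sqrt (4 * g\<^sup>2 * eta\<^sup>2 + m\<^sup>2) - (m + E)"
    unfolding E_def by (simp add: power2_eq_square algebra_simps)
  ultimately show ?thesis by simp
qed

theorem mainTheorem8:
  fixes g m eta :: real
  assumes "g > 0" and "m > 0" and "eta > 0"
    and "g * (eta\<^sup>2 + 1) < 1 \<or>
         m < 2 * g\<^sup>2 * eta\<^sup>2 / (g * (eta\<^sup>2 + 1) - 1) - g * (eta\<^sup>2 + 1) + 1"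
  shows "(\<exists>!Y :: fastvar.
           (case Y of (N1a, N2a, N1A, N2A, d, dA, da) \<Rightarrow>
              N1a > 0 \<and> N2a > 0 \<and> N1A > 0 \<and> N2A > 0)
           \<and> Gmap g m eta Y 0 = (0, 0, 0, 0, 0, 0, 0))
       \<and> (\<forall>Y :: fastvar.
           (case Y of (N1a, N2a, N1A, N2A, d, dA, da) \<Rightarrow>
              N1a > 0 \<and> N2a > 0 \<and> N1A > 0 \<and> N2A > 0)
           \<and> Gmap g m eta Y 0 = (0, 0, 0, 0, 0, 0, 0)
           \<longrightarrow> Fmap m Y = 0 \<and>
               (case Y of (N1a, N2a, N1A, N2A, d, dA, da) \<Rightarrow>
                  N1a = N2A \<and> N2a = N1A \<and> dA = da))"
proof -
  have "g * eta \<ge> 0" using assms(1,3) by simp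
  obtain x0 y0 where "x0 > 0" "y0 > 0" and populations:
    "\<And>x y. x > 0 \<and> y > 0 \<and> population_equilibrium g m eta x y \<longleftrightarrow> x = x0 \<and> y = y0"
    by (rule population_equilibrium_unique[OF assms(2) \<open>g * eta \<ge> 0\<close> equilibrium_size_pos[OF assms(2,4)]]) (rule that)
  have "(case Y of (N1a, N2a, N1A, N2A, d, dA, da) \<Rightarrow>
            N1a > 0 \<and> N2a > 0 \<and> N1A > 0 \<and> N2A > 0) \<and>
         Gmap g m eta Y 0 = (0, 0, 0, 0, 0, 0, 0) \<longleftrightarrow>
         Y = symmetric_equilibrium g m eta x0 y0" for Y
  proof -
    have "(\<exists>x y. x > 0 \<and> y > 0 \<and> population_equilibrium g m eta x y \<and>
                 Y = symmetric_equilibrium g m eta x y) \<longleftrightarrow>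
          (\<exists>x y. (x = x0 \<and> y = y0) \<and> Y = symmetric_equilibrium g m eta x y)"
      using populations by (metis (no_types, lifting))
    then show ?thesis using Gmap_positive_zero_iff[OF assms(1-3), of Y] by simp
  qed
  then show ?thesis
    using Fmap_symmetric_equilibrium[OF \<open>x0 > 0\<close> \<open>y0 > 0\<close>]
    by (simp add: symmetric_equilibrium_def Let_def)
qed

end
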